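(* Let $\varepsilon>0$, let $G$ be a graph and let $w:V(G)\to[0,1]$ be a weight function with $w(V(G))=1$. Let $\mathcal{S}=(S_1,\dots,S_k)$ be a loosely laminar sequence of separations of $G$ such that every $S\in\mathcal{S}$ is $\varepsilon$-skewed, with an anchor $v_i\in C(S_i)$ chosen for each $i$, such that every vertex of $G$ is the anchor of at most one separation in $\mathcal{S}$. Let $\beta_{\mathcal{S}}$ be the central bag for $\mathcal{S}$. Then: (i) $C(S)\subseteq\beta_{\mathcal{S}}$ for every $S\in\mathcal{S}$; (ii) if $G$ is connected and $G[C(S)]$ is connected for every $S\in\mathcal{S}$, then $G[\beta_{\mathcal{S}}]$ is connected; (iii) $w_{\mathcal{S}}(\beta_{\mathcal{S}})=1$ and $\max_{v\in\beta_{\mathcal{S}}}w_{\mathcal{S}}(v)\le \max_{v\in V(G)}w(v)+\varepsilon$.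
   Context: For $X\subseteq V(G)$, $w(X)=\sum_{x\in X}w(x)$. A separation of $G$ is a triple $S=(A,C,B)$ of pairwise disjoint sets with $A\cup C\cup B=V(G)$ and $A$ anticomplete to $B$ (no edges between them); write $A(S)=A$, $C(S)=C$, $B(S)=B$. A separation $(A,C,B)$ is $\varepsilon$-skewed if $w(A)<\varepsilon$ (the paper's convention: whenever a separation is $\varepsilon$-skewed, it is labeled so that $w(A)<\varepsilon$). Two separations $S_1,S_2$ are loosely non-crossing if $A(S_1)\cap C(S_2)=\emptyset$ and $A(S_2)\cap C(S_1)=\emptyset$; a sequence of separations is loosely laminar if every two of its members are loosely non-crossing. The central bag for $\mathcal{S}$ is $\beta_{\mathcal{S}}=\bigcap_{S\in\mathcal{S}}(B(S)\cup C(S))$. Writing $A_i=A(S_i)$, the weight function $w_{\mathcal{S}}$ on $\beta_{\mathcal{S}}$ is defined by $w_{\mathcal{S}}(v)=w(v)+w(A_i\setminus\bigcup_{1\le j<i}A_j)$ if $v=v_i$ is the anchor of $S_i$, and $w_{\mathcal{S}}(v)=w(v)$ otherwise; $w_{\mathcal{S}}(X)=\sum_{x\in X}w_{\mathcal{S}}(x)$. *)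

theory Defs
  imports Complex_Main
begin

definition graph :: "'a set \<Rightarrow> ('a \<Rightarrow> 'a \<Rightarrow> bool) \<Rightarrow> bool" where
  "graph V E \<longleftrightarrow> finite V \<and> (\<forall>x y. E x y \<longrightarrow> x \<in> V \<and> y \<in> V)
     \<and> (\<forall>x y. E x y \<longrightarrow> E y x) \<and> (\<forall>x. \<not> E x x)"

definition connected_induced :: "('a \<Rightarrow> 'a \<Rightarrow> bool) \<Rightarrow> 'a set \<Rightarrow> bool" where
  "connected_induced E X \<longleftrightarrow> X \<noteq> {} \<and>
     (\<forall>x\<in>X. \<forall>y\<in>X. (\<lambda>u v. u \<in> X \<and> v \<in> X \<and> E u v)\<^sup>*\<^sup>* x y)"

definition wsum :: "('a \<Rightarrow> real) \<Rightarrow> 'a set \<Rightarrow> real" where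
  "wsum w X = (\<Sum>x\<in>X. w x)"

type_synonym 'a separation = "'a set \<times> 'a set \<times> 'a set"

definition sepA :: "'a separation \<Rightarrow> 'a set" where "sepA S = fst S"
definition sepC :: "'a separation \<Rightarrow> 'a set" where "sepC S = fst (snd S)"
definition sepB :: "'a separation \<Rightarrow> 'a set" where "sepB S = snd (snd S)"

definition is_separation :: "'a set \<Rightarrow> ('a \<Rightarrow> 'a \<Rightarrow> bool) \<Rightarrow> 'a separation \<Rightarrow> bool" where
  "is_separation V E S \<longleftrightarrow>
     sepA S \<inter> sepC S = {} \<and> sepA S \<inter> sepB S = {} \<and> sepC S \<inter> sepB S = {}
     \<and> sepA S \<union> sepC S \<union> sepB S = V
     \<and> (\<forall>a\<in>sepA S. \<forall>b\<in>sepB S. \<not> E a b)"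

definition skewed :: "('a \<Rightarrow> real) \<Rightarrow> real \<Rightarrow> 'a separation \<Rightarrow> bool" where
  "skewed w eps S \<longleftrightarrow> wsum w (sepA S) < eps"

definition loosely_non_crossing :: "'a separation \<Rightarrow> 'a separation \<Rightarrow> bool" where
  "loosely_non_crossing S1 S2 \<longleftrightarrow> sepA S1 \<inter> sepC S2 = {} \<and> sepA S2 \<inter> sepC S1 = {}"

definition loosely_laminar :: "(nat \<Rightarrow> 'a separation) \<Rightarrow> nat \<Rightarrow> bool" where
  "loosely_laminar S k \<longleftrightarrow> (\<forall>i\<in>{1..k}. \<forall>j\<in>{1..k}. loosely_non_crossing (S i) (S j))"

definition central_bag :: "'a set \<Rightarrow> (nat \<Rightarrow> 'a separation) \<Rightarrow> nat \<Rightarrow> 'a set" where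
  "central_bag V S k = {v\<in>V. \<forall>i\<in>{1..k}. v \<in> sepB (S i) \<union> sepC (S i)}"

definition w_seq :: "('a \<Rightarrow> real) \<Rightarrow> (nat \<Rightarrow> 'a separation) \<Rightarrow> nat \<Rightarrow> (nat \<Rightarrow> 'a) \<Rightarrow> 'a \<Rightarrow> real" where
  "w_seq w S k anc v =
     (if \<exists>i\<in>{1..k}. anc i = v
      then (let i = (THE i. i \<in> {1..k} \<and> anc i = v) in
              w v + wsum w (sepA (S i) - (\<Union>j\<in>{1..<i}. sepA (S j))))
      else w v)"

end

theory Submission
  imports Defs
begin

(* By loose laminarity no C(S_j) meets any A(S_i), so the central bag is V minus the union of
   the sides A(S_i), and it contains every C(S_j).  A path between two vertices of the bag that
   enters A(S_i) must enter and leave it through C(S_i), because A(S_i) is anticomplete to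
   B(S_i); as G[C(S_i)] is connected, such a detour can be shortcut inside C(S_i), and doing
   this for one separation at a time yields a path inside the bag.  The weight w_S moves the
   weight of A_i minus the earlier A_j onto the anchor v_i; these pieces partition the union of
   the A_i, so the total weight is preserved, and each anchor gains at most w(A_i) < eps. *)

abbreviation induced :: "('a \<Rightarrow> 'a \<Rightarrow> bool) \<Rightarrow> 'a set \<Rightarrow> 'a \<Rightarrow> 'a \<Rightarrow> bool" where
  "induced E X \<equiv> \<lambda>u v. u \<in> X \<and> v \<in> X \<and> E u v"

lemma rtranclp_induced_mono:
  assumes "(induced E X)\<^sup>*\<^sup>* x y" and "X \<subseteq> Y"
  shows "(induced E Y)\<^sup>*\<^sup>* x y"
  using assms(1) by (rule rtranclp_mono[THEN predicate2D, rotated]) (use assms(2) in auto)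

lemma rtranclp_induced_avoid_side:
  assumes sym: "\<forall>x y. E x y \<longrightarrow> E y x"
    and anticomplete: "\<forall>a\<in>A. \<forall>b\<in>B. \<not> E a b"
    and W: "W \<subseteq> A \<union> C \<union> B" and C: "C \<subseteq> W - A"
    and C_connected: "\<forall>c\<in>C. \<forall>c'\<in>C. (induced E C)\<^sup>*\<^sup>* c c'"
    and path: "(induced E W)\<^sup>*\<^sup>* x y" and x: "x \<notin> A" and y: "y \<notin> A"
  shows "(induced E (W - A))\<^sup>*\<^sup>* x y"
proof -
  let ?R = "induced E (W - A)"
  \<comment> \<open>A walk from x that is currently inside A entered it from C, which was reached avoiding A.\<close>
  have "if z \<in> A then \<exists>c\<in>C. ?R\<^sup>*\<^sup>* x c else ?R\<^sup>*\<^sup>* x z"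
    if "(induced E W)\<^sup>*\<^sup>* x z" for z
    using that
  proof (induction rule: rtranclp_induct)
    case base
    then show ?case using x by simp
  next
    case (step u z)
    have uW: "u \<in> W" and zW: "z \<in> W" and Euz: "E u z" using step.hyps by auto
    show ?case
    proof (cases "u \<in> A")
      case uA: True
      then obtain c where c: "c \<in> C" "?R\<^sup>*\<^sup>* x c" using step.IH by auto
      show ?thesis
      proof (cases "z \<in> A")
        case True
        then show ?thesis using c by auto
      next
        case False
        have "z \<notin> B" using anticomplete uA Euz by blast
        then have "z \<in> C" using zW W False by blast
        then have "(induced E C)\<^sup>*\<^sup>* c z" using C_connected c(1) by blast
        then have "?R\<^sup>*\<^sup>* c z" using C by (rule rtranclp_induced_mono)
        then show ?thesis using False c(2) by simp
      qed
    next
      case uA: False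
      then have xu: "?R\<^sup>*\<^sup>* x u" using step.IH by simp
      show ?thesis
      proof (cases "z \<in> A")
        case True
        have "u \<notin> B" using anticomplete True Euz sym by blast
        then have "u \<in> C" using uW W uA by blast
        then show ?thesis using True xu by auto
      next
        case False
        then have "?R u z" using uW zW uA Euz by simp
        with xu have "?R\<^sup>*\<^sup>* x z" by (rule rtranclp.rtrancl_into_rtrancl)
        then show ?thesis using False by simp
      qed
    qed
  qed
  from this[OF path] show ?thesis using y by simp
qed

lemma rtranclp_induced_Diff_sides:
  assumes sym: "\<forall>x y. E x y \<longrightarrow> E y x" and "finite I"
    and seps: "\<forall>i\<in>I. is_separation V E (S i)"
    and non_crossing: "\<forall>i\<in>I. \<forall>j\<in>I. sepA (S i) \<inter> sepC (S j) = {}"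
    and C_connected: "\<forall>i\<in>I. connected_induced E (sepC (S i))"
    and path: "(induced E V)\<^sup>*\<^sup>* x y"
    and x: "x \<notin> (\<Union>i\<in>I. sepA (S i))" and y: "y \<notin> (\<Union>i\<in>I. sepA (S i))"
  shows "(induced E (V - (\<Union>i\<in>I. sepA (S i))))\<^sup>*\<^sup>* x y"
  using \<open>finite I\<close> seps non_crossing C_connected x y
proof (induction I rule: finite_induct)
  case empty
  then show ?case using path by simp
next
  case (insert i J)
  let ?W = "V - (\<Union>j\<in>J. sepA (S j))"
  have sep_i: "is_separation V E (S i)" using insert.prems(1) by simp
  have path_W: "(induced E ?W)\<^sup>*\<^sup>* x y" using insert.IH insert.prems by simp
  have anticomplete: "\<forall>a\<in>sepA (S i). \<forall>b\<in>sepB (S i). \<not> E a b"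
    and W: "?W \<subseteq> sepA (S i) \<union> sepC (S i) \<union> sepB (S i)"
    using sep_i unfolding is_separation_def by auto
  have C: "sepC (S i) \<subseteq> ?W - sepA (S i)"
    using sep_i insert.prems(2) unfolding is_separation_def by blast
  have C_conn: "\<forall>c\<in>sepC (S i). \<forall>c'\<in>sepC (S i). (induced E (sepC (S i)))\<^sup>*\<^sup>* c c'"
    using insert.prems(3) unfolding connected_induced_def by simp
  have "x \<notin> sepA (S i)" "y \<notin> sepA (S i)" using insert.prems(4,5) by simp_all
  then have "(induced E (?W - sepA (S i)))\<^sup>*\<^sup>* x y"
    by (rule rtranclp_induced_avoid_side[OF sym anticomplete W C C_conn path_W])
  moreover have "?W - sepA (S i) = V - (\<Union>j\<in>insert i J. sepA (S j))" by auto
  ultimately show ?case by simp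
qed

lemma central_bag_eq:
  assumes "\<forall>i\<in>{1..k}. is_separation V E (S i)"
  shows "central_bag V S k = V - (\<Union>i\<in>{1..k}. sepA (S i))"
  using assms unfolding central_bag_def is_separation_def by blast

lemma sepC_subset_central_bag:
  assumes seps: "\<forall>i\<in>{1..k}. is_separation V E (S i)" and "loosely_laminar S k"
    and "i \<in> {1..k}"
  shows "sepC (S i) \<subseteq> central_bag V S k"
  using assms unfolding central_bag_eq[OF seps] loosely_laminar_def loosely_non_crossing_def
    is_separation_def by blast

lemma connected_induced_central_bag:
  assumes sym: "\<forall>x y. E x y \<longrightarrow> E y x"
    and seps: "\<forall>i\<in>{1..k}. is_separation V E (S i)" and lam: "loosely_laminar S k"
    and V_connected: "connected_induced E V"
    and C_connected: "\<forall>i\<in>{1..k}. connected_induced E (sepC (S i))"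
  shows "connected_induced E (central_bag V S k)"
  unfolding connected_induced_def
proof (intro conjI ballI)
  show "central_bag V S k \<noteq> {}"
  proof (cases "k = 0")
    case True
    then show ?thesis using V_connected unfolding central_bag_def connected_induced_def by simp
  next
    case False
    then have "1 \<in> {1..k}" by simp
    then show ?thesis
      using sepC_subset_central_bag[OF seps lam] C_connected unfolding connected_induced_def
      by blast
  qed
next
  fix x y assume "x \<in> central_bag V S k" "y \<in> central_bag V S k"
  then show "(induced E (central_bag V S k))\<^sup>*\<^sup>* x y"
    unfolding central_bag_eq[OF seps]
    using rtranclp_induced_Diff_sides[OF sym _ seps _ C_connected, of x y] V_connected lam
    unfolding connected_induced_def loosely_laminar_def loosely_non_crossing_def by blast
qed

lemma sum_Diff_UN_prefix:
  fixes n :: nat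
  assumes "\<forall>i\<in>{1..n}. finite (A i)"
  shows "(\<Sum>i\<in>{1..n}. sum w (A i - (\<Union>j\<in>{1..<i}. A j))) = sum w (\<Union>i\<in>{1..n}. A i)"
  using assms
proof (induction n)
  case 0
  then show ?case by simp
next
  case (Suc n)
  have split: "(\<Union>i\<in>{1..Suc n}. A i) = (\<Union>i\<in>{1..n}. A i) \<union> (A (Suc n) - (\<Union>j\<in>{1..n}. A j))"
    by (auto simp: atLeastAtMostSuc_conv)
  have "sum w (\<Union>i\<in>{1..Suc n}. A i)
      = sum w (\<Union>i\<in>{1..n}. A i) + sum w (A (Suc n) - (\<Union>j\<in>{1..n}. A j))"
    unfolding split by (rule sum.union_disjoint) (use Suc.prems in auto)
  then show ?case
    using Suc by (simp add: atLeastAtMostSuc_conv atLeastLessThanSuc_atLeastAtMost add.commute)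
qed

lemma w_seq_anchor:
  assumes "inj_on anc {1..k}" and "i \<in> {1..k}"
  shows "w_seq w S k anc (anc i) = w (anc i) + wsum w (sepA (S i) - (\<Union>j\<in>{1..<i}. sepA (S j)))"
proof -
  have "(THE j. j \<in> {1..k} \<and> anc j = anc i) = i"
    using assms by (intro the_equality) (auto dest: inj_onD)
  then show ?thesis using assms(2) unfolding w_seq_def by auto
qed

lemma w_seq_non_anchor:
  assumes "v \<notin> anc ` {1..k}"
  shows "w_seq w S k anc v = w v"
  using assms unfolding w_seq_def by auto

lemma wsum_w_seq:
  assumes "finite X" and "anc ` {1..k} \<subseteq> X" and inj: "inj_on anc {1..k}"
    and finA: "\<forall>i\<in>{1..k}. finite (sepA (S i))"
  shows "wsum (w_seq w S k anc) X = wsum w X + wsum w (\<Union>i\<in>{1..k}. sepA (S i))"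
proof -
  let ?N = "X - anc ` {1..k}"
  have "wsum (w_seq w S k anc) X = sum (w_seq w S k anc) ?N + sum (w_seq w S k anc) (anc ` {1..k})"
    unfolding wsum_def using assms(2,1) by (rule sum.subset_diff)
  also have "sum (w_seq w S k anc) ?N = sum w ?N"
    using w_seq_non_anchor by (intro sum.cong) auto
  also have "sum (w_seq w S k anc) (anc ` {1..k}) = (\<Sum>i\<in>{1..k}. w_seq w S k anc (anc i))"
    using inj by (simp add: sum.reindex)
  also have "\<dots> = (\<Sum>i\<in>{1..k}. w (anc i)) + (\<Sum>i\<in>{1..k}. wsum w (sepA (S i) - (\<Union>j\<in>{1..<i}. sepA (S j))))"
    by (simp add: w_seq_anchor[OF inj] sum.distrib)
  also have "(\<Sum>i\<in>{1..k}. w (anc i)) = sum w (anc ` {1..k})"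
    using inj by (simp add: sum.reindex)
  also have "(\<Sum>i\<in>{1..k}. wsum w (sepA (S i) - (\<Union>j\<in>{1..<i}. sepA (S j)))) = wsum w (\<Union>i\<in>{1..k}. sepA (S i))"
    unfolding wsum_def using finA by (rule sum_Diff_UN_prefix)
  finally show ?thesis
    unfolding wsum_def using sum.subset_diff[OF assms(2,1), of w] by simp
qed

lemma w_seq_le:
  assumes inj: "inj_on anc {1..k}" and skew: "\<forall>i\<in>{1..k}. skewed w eps (S i)" and "eps \<ge> 0"
    and finA: "\<forall>i\<in>{1..k}. finite (sepA (S i))"
    and nonneg: "\<forall>i\<in>{1..k}. \<forall>a\<in>sepA (S i). 0 \<le> w a"
  shows "w_seq w S k anc v \<le> w v + eps"
proof (cases "v \<in> anc ` {1..k}")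
  case True
  then obtain i where i: "i \<in> {1..k}" and v: "v = anc i" by blast
  have "wsum w (sepA (S i) - (\<Union>j\<in>{1..<i}. sepA (S j))) \<le> wsum w (sepA (S i))"
    unfolding wsum_def using finA nonneg i by (intro sum_mono2) auto
  also have "\<dots> < eps" using skew i unfolding skewed_def by blast
  finally show ?thesis using w_seq_anchor[OF inj i] v by simp
next
  case False
  then show ?thesis using w_seq_non_anchor[OF False] \<open>eps \<ge> 0\<close> by simp
qed

theorem lemma3p2:
  fixes V :: "'a set" and E :: "'a \<Rightarrow> 'a \<Rightarrow> bool" and w :: "'a \<Rightarrow> real"
    and eps :: real and k :: nat and S :: "nat \<Rightarrow> 'a separation" and anc :: "nat \<Rightarrow> 'a"
  assumes eps: "eps > 0"
    and G: "graph V E"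
    and w01: "\<forall>v\<in>V. 0 \<le> w v \<and> w v \<le> 1"
    and wtot: "wsum w V = 1"
    and seps: "\<forall>i\<in>{1..k}. is_separation V E (S i)"
    and lam: "loosely_laminar S k"
    and skew: "\<forall>i\<in>{1..k}. skewed w eps (S i)"
    and anc: "\<forall>i\<in>{1..k}. anc i \<in> sepC (S i)"
    and anc_inj: "inj_on anc {1..k}"
  shows "(\<forall>i\<in>{1..k}. sepC (S i) \<subseteq> central_bag V S k)
    \<and> ((connected_induced E V \<and> (\<forall>i\<in>{1..k}. connected_induced E (sepC (S i))))
         \<longrightarrow> connected_induced E (central_bag V S k))
    \<and> wsum (w_seq w S k anc) (central_bag V S k) = 1
    \<and> (\<forall>v\<in>central_bag V S k. w_seq w S k anc v \<le> Max (w ` V) + eps)"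
proof -
  have finV: "finite V" and sym: "\<forall>x y. E x y \<longrightarrow> E y x" using G unfolding graph_def by auto
  let ?U = "\<Union>i\<in>{1..k}. sepA (S i)"
  have U: "?U \<subseteq> V" using seps unfolding is_separation_def by blast
  then have finA: "\<forall>i\<in>{1..k}. finite (sepA (S i))" using finV by (auto intro: finite_subset)
  have C_bag: "\<forall>i\<in>{1..k}. sepC (S i) \<subseteq> central_bag V S k"
    using sepC_subset_central_bag[OF seps lam] by blast
  have "anc ` {1..k} \<subseteq> central_bag V S k" using anc C_bag by blast
  then have "wsum (w_seq w S k anc) (central_bag V S k) = wsum w (V - ?U) + wsum w ?U"
    using wsum_w_seq[OF _ _ anc_inj finA] finV unfolding central_bag_eq[OF seps] by simp
  also have "\<dots> = 1"
    using wtot sum.subset_diff[OF U finV, of w] unfolding wsum_def by simp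
  finally have total: "wsum (w_seq w S k anc) (central_bag V S k) = 1" .
  have "w_seq w S k anc v \<le> Max (w ` V) + eps" if "v \<in> central_bag V S k" for v
  proof -
    have "v \<in> V" using that unfolding central_bag_def by blast
    then have "w v \<le> Max (w ` V)" using finV by simp
    moreover have "w_seq w S k anc v \<le> w v + eps"
      using w_seq_le[OF anc_inj skew _ finA] eps w01 U by auto
    ultimately show ?thesis by simp
  qed
  then show ?thesis
    using C_bag connected_induced_central_bag[OF sym seps lam] total by blast
qed

end
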